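(* For each $N$, let $\Psi=[\psi_1,\dots,\psi_N]$ be an orthonormal basis of $\mathbb{R}^N$, let $T\subseteq\{1,\dots,N\}$ be a fixed index set with $|T|=K$, and let $w\in\mathbb{R}^N$ have i.i.d. entries with zero mean and zero median, $\mathbb{E}|w_1|=\mu$, $\mathbb{E}[w_1^2]=\sigma^2$, where $\mu,\sigma^2>0$ are constants not depending on $N$. Assume $\|\psi_k\|_1=O(\log N)$ and $\|\psi_k\|_\infty=o(1)$ uniformly over $k\in T$, and $\|w\|_\infty=O(1)$ (the entries are bounded by a constant independent of $N$). Let $\epsilon>0$ and $\Delta_{\mathrm{W}}=\epsilon\left\|\sum_{k\in T}\psi_k\psi_k^Tw\right\|_1$. Then $\lim_{N\to\infty}\Pr\left(\Delta_{\mathrm{W}}\le O(K\,\mathrm{polylog}(N))\right)=1$, i.e. there is a bound of the form $O(K\,\mathrm{polylog}(N))$ that $\Delta_{\mathrm{W}}$ satisfies with probability tending to $1$.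
   Context: Asymptotic notation: $f=O(g)$ if $|f/g|<C$ for some constant $C>0$; $f=o(g)$ if $|f/g|\to0$; $\mathrm{polylog}(N)$ denotes a polynomial in $\log N$. Without defense the corresponding distortion is $\epsilon\|w\|_1=\Theta(N)$. *)

theory Defs
  imports "HOL-Probability.Probability"
begin

text \<open>Vectors in R^N are represented as functions nat => real, indexed by {..<N}.
  Psi k i is the i-th coordinate of the k-th basis vector psi_k.\<close>

definition orthonormal_basis_fun :: "nat \<Rightarrow> (nat \<Rightarrow> nat \<Rightarrow> real) \<Rightarrow> bool" where
  "orthonormal_basis_fun N Psi \<longleftrightarrow>
     (\<forall>j<N. \<forall>k<N. (\<Sum>i<N. Psi j i * Psi k i) = (if j = k then 1 else 0))"

definition Delta_W :: "real \<Rightarrow> nat \<Rightarrow> (nat \<Rightarrow> nat \<Rightarrow> real) \<Rightarrow> nat set \<Rightarrow> (nat \<Rightarrow> real) \<Rightarrow> real" where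
  "Delta_W eps N Psi T w =
     eps * (\<Sum>i<N. \<bar>\<Sum>k\<in>T. Psi k i * (\<Sum>j<N. Psi k j * w j)\<bar>)"

end

theory Submission
  imports Defs
begin

text \<open>The bound holds deterministically once the noise is bounded: each summand
  \<open>\<psi>\<^sub>k \<psi>\<^sub>k\<^sup>T w\<close> has \<open>\<ell>\<^sub>1\<close>-norm \<open>\<parallel>\<psi>\<^sub>k\<parallel>\<^sub>1 \<bar>\<psi>\<^sub>k\<^sup>T w\<bar> \<le> \<parallel>\<psi>\<^sub>k\<parallel>\<^sub>1\<^sup>2 \<parallel>w\<parallel>\<^sub>\<infinity>\<close>, so
  \<open>\<Delta>\<^sub>W \<le> \<epsilon> K \<parallel>w\<parallel>\<^sub>\<infinity> max\<^sub>k \<parallel>\<psi>\<^sub>k\<parallel>\<^sub>1\<^sup>2 = O(K log\<^sup>2 N)\<close>. Since \<open>\<parallel>w\<parallel>\<^sub>\<infinity> \<le> B\<close> almost surely,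
  the event has probability exactly 1 for all large \<open>N\<close>.\<close>

lemma abs_inner_le_l1_mult_bound:
  fixes a w :: "nat \<Rightarrow> real"
  assumes "\<And>j. j < N \<Longrightarrow> \<bar>w j\<bar> \<le> B"
  shows "\<bar>\<Sum>j<N. a j * w j\<bar> \<le> B * (\<Sum>j<N. \<bar>a j\<bar>)"
proof -
  have "\<bar>\<Sum>j<N. a j * w j\<bar> \<le> (\<Sum>j<N. \<bar>a j\<bar> * \<bar>w j\<bar>)"
    by (metis (no_types, lifting) abs_mult sum.cong sum_abs)
  also have "\<dots> \<le> (\<Sum>j<N. \<bar>a j\<bar> * B)"
    using assms by (intro sum_mono mult_left_mono) auto
  finally show ?thesis
    by (simp add: sum_distrib_left mult.commute)
qed

lemma l1_norm_sum_le:
  fixes Psi :: "nat \<Rightarrow> nat \<Rightarrow> real" and c :: "nat \<Rightarrow> real"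
  shows "(\<Sum>i<N. \<bar>\<Sum>k\<in>T. Psi k i * c k\<bar>) \<le> (\<Sum>k\<in>T. (\<Sum>i<N. \<bar>Psi k i\<bar>) * \<bar>c k\<bar>)"
proof -
  have "(\<Sum>i<N. \<bar>\<Sum>k\<in>T. Psi k i * c k\<bar>) \<le> (\<Sum>i<N. \<Sum>k\<in>T. \<bar>Psi k i\<bar> * \<bar>c k\<bar>)"
    by (intro sum_mono) (metis (no_types, lifting) abs_mult sum.cong sum_abs)
  also have "\<dots> = (\<Sum>k\<in>T. (\<Sum>i<N. \<bar>Psi k i\<bar>) * \<bar>c k\<bar>)"
    by (subst sum.swap) (simp add: sum_distrib_right)
  finally show ?thesis .
qed

lemma Delta_W_le_card_mult_l1_bound:
  fixes Psi :: "nat \<Rightarrow> nat \<Rightarrow> real" and w :: "nat \<Rightarrow> real"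
  assumes w_le: "\<And>j. j < N \<Longrightarrow> \<bar>w j\<bar> \<le> B" and "B \<ge> 0"
    and l1_le: "\<And>k. k \<in> T \<Longrightarrow> (\<Sum>i<N. \<bar>Psi k i\<bar>) \<le> L"
    and "eps \<ge> 0"
  shows "Delta_W eps N Psi T w \<le> eps * (B * L\<^sup>2) * real (card T)"
proof -
  let ?l1 = "\<lambda>k. \<Sum>i<N. \<bar>Psi k i\<bar>"
  have summand_le: "?l1 k * \<bar>\<Sum>j<N. Psi k j * w j\<bar> \<le> B * L\<^sup>2" if k: "k \<in> T" for k
  proof -
    have "?l1 k * \<bar>\<Sum>j<N. Psi k j * w j\<bar> \<le> ?l1 k * (B * ?l1 k)"
      by (intro mult_left_mono abs_inner_le_l1_mult_bound w_le) (auto intro: sum_nonneg)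
    also have "\<dots> = B * (?l1 k * ?l1 k)"
      by simp
    also have "\<dots> \<le> B * (L * L)"
      using k \<open>B \<ge> 0\<close> l1_le order_trans[OF sum_nonneg l1_le]
      by (intro mult_left_mono mult_mono) (auto intro: sum_nonneg)
    finally show ?thesis
      by (simp add: power2_eq_square)
  qed
  have "(\<Sum>i<N. \<bar>\<Sum>k\<in>T. Psi k i * (\<Sum>j<N. Psi k j * w j)\<bar>)
          \<le> (\<Sum>k\<in>T. ?l1 k * \<bar>\<Sum>j<N. Psi k j * w j\<bar>)"
    by (rule l1_norm_sum_le)
  also have "\<dots> \<le> real (card T) * (B * L\<^sup>2)"
    using sum_mono[OF summand_le] by (cases "finite T") simp_all
  finally have "eps * (\<Sum>i<N. \<bar>\<Sum>k\<in>T. Psi k i * (\<Sum>j<N. Psi k j * w j)\<bar>)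
                  \<le> eps * (real (card T) * (B * L\<^sup>2))"
    using \<open>eps \<ge> 0\<close> by (rule mult_left_mono)
  then show ?thesis
    unfolding Delta_W_def by (simp add: mult_ac)
qed

lemma AE_PiM_all_bounded:
  fixes M :: "'a::linordered_idom measure"
  assumes "prob_space M" and "finite I" and "AE x in M. \<bar>x\<bar> \<le> B"
  shows "AE w in PiM I (\<lambda>_. M). \<forall>j\<in>I. \<bar>w j\<bar> \<le> B"
proof -
  interpret product_prob_space "\<lambda>_. M" I
    using \<open>prob_space M\<close> by (rule product_prob_spaceI)
  show ?thesis
    using assms AE_component[OF _ assms(3)] by (subst AE_finite_all) auto
qed

lemma Delta_W_measurable:
  assumes "sets M = sets borel"
  shows "(\<lambda>w. Delta_W eps N Psi T w) \<in> borel_measurable (PiM {..<N} (\<lambda>_. M))"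
proof -
  have [measurable]: "(\<lambda>w. w j) \<in> borel_measurable (PiM {..<N} (\<lambda>_. M))" if "j < N" for j
    using measurable_component_singleton[of j "{..<N}" "\<lambda>_. M"] that
    by (simp add: measurable_cong_sets[OF refl assms])
  show ?thesis
    unfolding Delta_W_def by measurable
qed

lemma prob_PiM_Delta_W_le_eq_1:
  assumes "prob_space M" and "sets M = sets borel" and "AE x in M. \<bar>x\<bar> \<le> B"
    and "\<And>k. k \<in> T \<Longrightarrow> (\<Sum>i<N. \<bar>Psi k i\<bar>) \<le> L" and "eps \<ge> 0"
  shows "measure (PiM {..<N} (\<lambda>_. M))
           {w \<in> space (PiM {..<N} (\<lambda>_. M)). Delta_W eps N Psi T w \<le> eps * (B * L\<^sup>2) * real (card T)} = 1"
proof -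
  interpret P: prob_space "PiM {..<N} (\<lambda>_. M)"
    using \<open>prob_space M\<close> by (rule prob_space_PiM)
  have "AE x in M. B \<ge> 0"
    using assms(3) by eventually_elim (rule order_trans[OF abs_ge_zero])
  then have B_nonneg: "B \<ge> 0"
    using prob_space.AE_const[OF assms(1)] by simp
  have "AE w in PiM {..<N} (\<lambda>_. M). Delta_W eps N Psi T w \<le> eps * (B * L\<^sup>2) * real (card T)"
    using AE_PiM_all_bounded[OF assms(1) finite_lessThan assms(3)]
    by eventually_elim (use B_nonneg assms(4,5) in \<open>auto intro: Delta_W_le_card_mult_l1_bound\<close>)
  moreover have "{w \<in> space (PiM {..<N} (\<lambda>_. M)). Delta_W eps N Psi T w \<le> eps * (B * L\<^sup>2) * real (card T)}
                   \<in> sets (PiM {..<N} (\<lambda>_. M))"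
    using Delta_W_measurable[OF assms(2)] by measurable
  ultimately show ?thesis
    by (simp add: P.prob_Collect_eq_1)
qed

theorem theorem2:
  fixes Psi :: "nat \<Rightarrow> nat \<Rightarrow> nat \<Rightarrow> real"
    and T :: "nat \<Rightarrow> nat set"
    and D :: "nat \<Rightarrow> real measure"
    and \<mu> \<sigma> \<epsilon> :: real
  assumes onb: "\<And>N. orthonormal_basis_fun N (Psi N)"
    and T_sub: "\<And>N. T N \<subseteq> {..<N}"
    and prob: "\<And>N. prob_space (D N)"
    and distr_borel: "\<And>N. sets (D N) = sets borel"
    and mean_zero: "\<And>N. integrable (D N) (\<lambda>x. x) \<and> (\<integral>x. x \<partial>D N) = 0"
    and median_zero: "\<And>N. measure (D N) {x. x \<le> 0} \<ge> 1/2 \<and> measure (D N) {x. x \<ge> 0} \<ge> 1/2"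
    and abs_mean: "\<And>N. (\<integral>x. \<bar>x\<bar> \<partial>D N) = \<mu>"
    and second_moment: "\<And>N. integrable (D N) (\<lambda>x. x\<^sup>2) \<and> (\<integral>x. x\<^sup>2 \<partial>D N) = \<sigma>\<^sup>2"
    and \<mu>_pos: "\<mu> > 0" and \<sigma>_pos: "\<sigma> > 0"
    and l1_bound: "\<exists>C. \<forall>\<^sub>F N in sequentially. \<forall>k\<in>T N. (\<Sum>i<N. \<bar>Psi N k i\<bar>) \<le> C * ln (real N)"
    and linf_small: "\<And>e. e > 0 \<Longrightarrow> \<forall>\<^sub>F N in sequentially. \<forall>k\<in>T N. \<forall>i<N. \<bar>Psi N k i\<bar> \<le> e"
    and w_bounded: "\<exists>B. \<forall>N. AE x in D N. \<bar>x\<bar> \<le> B"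
    and \<epsilon>_pos: "\<epsilon> > 0"
  shows "\<exists>C (a::nat).
           (\<lambda>N. measure (PiM {..<N} (\<lambda>_. D N))
                   {w \<in> space (PiM {..<N} (\<lambda>_. D N)).
                      Delta_W \<epsilon> N (Psi N) (T N) w \<le> C * real (card (T N)) * (ln (real N)) ^ a})
           \<longlonglongrightarrow> 1"
proof -
  obtain C where C: "\<forall>\<^sub>F N in sequentially. \<forall>k\<in>T N. (\<Sum>i<N. \<bar>Psi N k i\<bar>) \<le> C * ln (real N)"
    using l1_bound by blast
  obtain B where B: "\<And>N. AE x in D N. \<bar>x\<bar> \<le> B"
    using w_bounded by blast
  have "\<forall>\<^sub>F N in sequentially. measure (PiM {..<N} (\<lambda>_. D N))
          {w \<in> space (PiM {..<N} (\<lambda>_. D N)).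
             Delta_W \<epsilon> N (Psi N) (T N) w \<le> \<epsilon> * (B * C\<^sup>2) * real (card (T N)) * (ln (real N)) ^ 2} = 1"
    using C
  proof eventually_elim
    case (elim N)
    have "measure (PiM {..<N} (\<lambda>_. D N))
            {w \<in> space (PiM {..<N} (\<lambda>_. D N)).
               Delta_W \<epsilon> N (Psi N) (T N) w \<le> \<epsilon> * (B * (C * ln (real N))\<^sup>2) * real (card (T N))} = 1"
      by (rule prob_PiM_Delta_W_le_eq_1) (use prob distr_borel B elim \<epsilon>_pos in auto)
    then show ?case
      by (simp add: power_mult_distrib mult_ac)
  qed
  then show ?thesis
    by (intro exI tendsto_eventually)
qed

end
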